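(* Consider the nonatomic game with tolls, with cost densities $\bar c_{lj}(\mathbf{m})=g_{lj}c(m_j)+\gamma_l\sum_{i=1}^L m_{ij}g_{ij}c'(m_j)$, and suppose $h_{lj}=h_j$ for all $l\in\mathcal{L}$, $j\in\mathcal{N}$. Then every Nash equilibrium of this game is system optimal, i.e., minimizes $C(\mathbf{m})=\sum_{j\in\mathcal{N}}\sum_{l=1}^L m_{lj}g_{lj}c(m_j)$ over all congestion profiles.
   Context: Nonatomic model: classes $\mathcal{L}=\{1,\dots,L\}$ of nonatomic mobiles, class $l$ having total mass $M_l>0$, target SINR density $\gamma_l>0$ and power gain $h_{lj}>0$ to BS $j\in\mathcal{N}=\{1,\dots,N\}$; noise power $\sigma^2>0$. A congestion profile is $\mathbf{m}=(m_{lj})$ with $m_{lj}\ge0$, $\sum_j m_{lj}=M_l$. Set $m_j=\sum_l\gamma_l m_{lj}$, $g_{lj}=\gamma_l\sigma^2/h_{lj}$, $c(z)=1/(1-z)$ for $z<1$ and $c(z)=\infty$ for $z\ge1$, $c'(z)=1/(1-z)^2$ for $z<1$ and $c'(z)=\infty$ for $z\ge1$. $\mathbf{m}$ is a Nash equilibrium if for all $l,j$, $m_{lj}>0$ implies $\bar c_{lj}(\mathbf{m})\le \bar c_{lk}(\mathbf{m})$ for all $k$. Standing feasibility assumption: $\sum_l\gamma_l M_l<N$. *)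

theory Defs
  imports Complex_Main "HOL-Library.Extended_Real"
begin

text \<open>Classes are indexed by {1..L}, base stations by {1..N}.
  A profile is m :: nat \<Rightarrow> nat \<Rightarrow> real, m l j = mass of class l at BS j.\<close>

definition cfun :: "real \<Rightarrow> ereal" where
  "cfun z = (if z < 1 then ereal (1 / (1 - z)) else \<infinity>)"

definition dcfun :: "real \<Rightarrow> ereal" where
  "dcfun z = (if z < 1 then ereal (1 / (1 - z)^2) else \<infinity>)"

definition gcoef :: "(nat \<Rightarrow> real) \<Rightarrow> real \<Rightarrow> (nat \<Rightarrow> nat \<Rightarrow> real) \<Rightarrow> nat \<Rightarrow> nat \<Rightarrow> real" where
  "gcoef \<gamma> \<sigma>2 h l j = \<gamma> l * \<sigma>2 / h l j"

definition load :: "nat \<Rightarrow> (nat \<Rightarrow> real) \<Rightarrow> (nat \<Rightarrow> nat \<Rightarrow> real) \<Rightarrow> nat \<Rightarrow> real" where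
  "load L \<gamma> m j = (\<Sum>l\<in>{1..L}. \<gamma> l * m l j)"

definition congestion_profile ::
  "nat \<Rightarrow> nat \<Rightarrow> (nat \<Rightarrow> real) \<Rightarrow> (nat \<Rightarrow> nat \<Rightarrow> real) \<Rightarrow> bool" where
  "congestion_profile L N M m \<longleftrightarrow>
     (\<forall>l\<in>{1..L}. \<forall>j\<in>{1..N}. m l j \<ge> 0) \<and>
     (\<forall>l\<in>{1..L}. (\<Sum>j\<in>{1..N}. m l j) = M l)"

definition toll_density ::
  "nat \<Rightarrow> (nat \<Rightarrow> real) \<Rightarrow> real \<Rightarrow> (nat \<Rightarrow> nat \<Rightarrow> real) \<Rightarrow> (nat \<Rightarrow> nat \<Rightarrow> real)
     \<Rightarrow> nat \<Rightarrow> nat \<Rightarrow> ereal" where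
  "toll_density L \<gamma> \<sigma>2 h m l j =
     ereal (gcoef \<gamma> \<sigma>2 h l j) * cfun (load L \<gamma> m j)
     + ereal (\<gamma> l) * (\<Sum>i\<in>{1..L}. ereal (m i j * gcoef \<gamma> \<sigma>2 h i j) * dcfun (load L \<gamma> m j))"

text \<open>Total cost C(m) = sum_j sum_l m_lj g_lj c(m_j)  (with 0 * \<infinity> = 0).\<close>
definition total_cost ::
  "nat \<Rightarrow> nat \<Rightarrow> (nat \<Rightarrow> real) \<Rightarrow> real \<Rightarrow> (nat \<Rightarrow> nat \<Rightarrow> real) \<Rightarrow> (nat \<Rightarrow> nat \<Rightarrow> real) \<Rightarrow> ereal" where
  "total_cost L N \<gamma> \<sigma>2 h m =
     (\<Sum>j\<in>{1..N}. \<Sum>l\<in>{1..L}. ereal (m l j * gcoef \<gamma> \<sigma>2 h l j) * cfun (load L \<gamma> m j))"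

definition toll_nash_eq ::
  "nat \<Rightarrow> nat \<Rightarrow> (nat \<Rightarrow> real) \<Rightarrow> (nat \<Rightarrow> real) \<Rightarrow> real \<Rightarrow> (nat \<Rightarrow> nat \<Rightarrow> real)
     \<Rightarrow> (nat \<Rightarrow> nat \<Rightarrow> real) \<Rightarrow> bool" where
  "toll_nash_eq L N M \<gamma> \<sigma>2 h m \<longleftrightarrow>
     congestion_profile L N M m \<and>
     (\<forall>l\<in>{1..L}. \<forall>j\<in>{1..N}. m l j > 0 \<longrightarrow>
        (\<forall>k\<in>{1..N}. toll_density L \<gamma> \<sigma>2 h m l j \<le> toll_density L \<gamma> \<sigma>2 h m l k))"

end

theory Submission
  imports Defs
begin

text \<open>With a common gain the coefficients factor as \<open>g\<^sub>l\<^sub>j = \<gamma>\<^sub>l a\<^sub>j\<close>, \<open>a\<^sub>j = \<sigma>\<^sup>2/h\<^sub>j\<close>,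
  so the total cost is the separable convex function \<open>\<Sum>\<^sub>j a\<^sub>j \<phi>(z\<^sub>j)\<close> of the station loads,
  \<open>\<phi>(z) = z/(1-z)\<close>, and the toll density of class \<open>l\<close> at station \<open>j\<close> is exactly
  \<open>\<gamma>\<^sub>l a\<^sub>j \<phi>'(z\<^sub>j)\<close>. At an equilibrium every class therefore uses only stations of minimal
  marginal cost, which yields the variational inequality \<open>\<Sum>\<^sub>j a\<^sub>j \<phi>'(z\<^sub>j)(z'\<^sub>j - z\<^sub>j) \<ge> 0\<close>
  for every other profile; convexity of \<open>\<phi>\<close> turns it into \<open>C(m) \<le> C(m')\<close>.
  Feasibility rules out overloaded stations at equilibrium: their toll is infinite, so a class
  using one is indifferent only if all stations are overloaded, i.e. the total load is at least N.\<close>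

lemma frac_tangent_le:
  fixes x y :: real
  assumes "x < 1" "y < 1"
  shows "x / (1 - x) + (y - x) / (1 - x)^2 \<le> y / (1 - y)"
proof -
  have "1 - x \<noteq> 0" "1 - y \<noteq> 0" using assms by auto
  then have "y / (1 - y) - (x / (1 - x) + (y - x) / (1 - x)^2) = (y - x)^2 / ((1 - y) * (1 - x)^2)"
    by (simp add: divide_simps) algebra
  moreover have "(y - x)^2 / ((1 - y) * (1 - x)^2) \<ge> 0"
    using assms by simp
  ultimately show ?thesis by linarith
qed

lemma sum_frac_le_of_variational_ineq:
  fixes a z z' :: "'a \<Rightarrow> real"
  assumes "\<forall>j\<in>S. a j \<ge> 0" "\<forall>j\<in>S. z j < 1" "\<forall>j\<in>S. z' j < 1"
    and "(\<Sum>j\<in>S. a j / (1 - z j)^2 * z j) \<le> (\<Sum>j\<in>S. a j / (1 - z j)^2 * z' j)"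
  shows "(\<Sum>j\<in>S. a j * (z j / (1 - z j))) \<le> (\<Sum>j\<in>S. a j * (z' j / (1 - z' j)))"
proof -
  have tangent: "a j * (z j / (1 - z j)) + a j / (1 - z j)^2 * (z' j - z j) \<le> a j * (z' j / (1 - z' j))"
    if "j \<in> S" for j
    using mult_left_mono[OF frac_tangent_le, of "z j" "z' j" "a j"] assms that
    by (simp add: distrib_left)
  have "(\<Sum>j\<in>S. a j * (z j / (1 - z j)))
      \<le> (\<Sum>j\<in>S. a j * (z j / (1 - z j)) + a j / (1 - z j)^2 * (z' j - z j))"
    using assms(4) by (simp add: sum.distrib right_diff_distrib sum_subtractf)
  also have "\<dots> \<le> (\<Sum>j\<in>S. a j * (z' j / (1 - z' j)))"
    using tangent by (rule sum_mono)
  finally show ?thesis .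
qed

lemma sum_weighted_le_of_support_minimal:
  fixes D x y :: "'a \<Rightarrow> real"
  assumes "finite S" "\<forall>j\<in>S. x j \<ge> 0" "\<forall>j\<in>S. y j \<ge> 0" "(\<Sum>j\<in>S. x j) = (\<Sum>j\<in>S. y j)"
    and minimal: "\<forall>j\<in>S. \<forall>k\<in>S. x j > 0 \<longrightarrow> D j \<le> D k"
  shows "(\<Sum>j\<in>S. D j * x j) \<le> (\<Sum>j\<in>S. D j * y j)"
proof (cases "\<exists>j0\<in>S. x j0 > 0")
  case True
  then obtain j0 where j0: "j0 \<in> S" "x j0 > 0" by blast
  have "(\<Sum>j\<in>S. D j * x j) \<le> (\<Sum>j\<in>S. D j0 * x j)"
  proof (rule sum_mono)
    fix j assume "j \<in> S"
    then show "D j * x j \<le> D j0 * x j"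
      using minimal j0 assms(2) by (cases "x j > 0") auto
  qed
  also have "\<dots> = (\<Sum>j\<in>S. D j0 * y j)"
    by (simp add: sum_distrib_left[symmetric] assms(4))
  also have "\<dots> \<le> (\<Sum>j\<in>S. D j * y j)"
    using minimal j0 assms(3) by (intro sum_mono mult_right_mono) auto
  finally show ?thesis .
next
  case False
  then have "\<forall>j\<in>S. x j = 0" using assms(2) by force
  moreover from this have "\<forall>j\<in>S. y j = 0"
    using assms by (simp add: sum_nonneg_eq_0_iff)
  ultimately show ?thesis by simp
qed

lemma sum_load:
  assumes "congestion_profile L N M m"
  shows "(\<Sum>j\<in>{1..N}. load L \<gamma> m j) = (\<Sum>l\<in>{1..L}. \<gamma> l * M l)"
proof -
  have "(\<Sum>j\<in>{1..N}. load L \<gamma> m j) = (\<Sum>l\<in>{1..L}. \<gamma> l * (\<Sum>j\<in>{1..N}. m l j))"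
    unfolding load_def by (subst sum.swap) (simp add: sum_distrib_left)
  then show ?thesis
    using assms by (simp add: congestion_profile_def)
qed

lemma sum_weighted_load:
  "(\<Sum>j\<in>{1..N}. D j * load L \<gamma> m j) = (\<Sum>l\<in>{1..L}. \<gamma> l * (\<Sum>j\<in>{1..N}. D j * m l j))"
proof -
  have "(\<Sum>j\<in>{1..N}. D j * load L \<gamma> m j) = (\<Sum>j\<in>{1..N}. \<Sum>l\<in>{1..L}. \<gamma> l * (D j * m l j))"
    unfolding load_def by (simp add: sum_distrib_left mult_ac)
  also have "\<dots> = (\<Sum>l\<in>{1..L}. \<gamma> l * (\<Sum>j\<in>{1..N}. D j * m l j))"
    by (subst sum.swap) (simp add: sum_distrib_left)
  finally show ?thesis .
qed

lemma sum_weighted_load_le_of_support_minimal: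
  assumes "congestion_profile L N M m" "congestion_profile L N M m'"
    and "\<forall>l\<in>{1..L}. \<gamma> l \<ge> 0"
    and "\<forall>l\<in>{1..L}. \<forall>j\<in>{1..N}. \<forall>k\<in>{1..N}. m l j > 0 \<longrightarrow> D j \<le> D k"
  shows "(\<Sum>j\<in>{1..N}. D j * load L \<gamma> m j) \<le> (\<Sum>j\<in>{1..N}. D j * load L \<gamma> m' j)"
proof -
  have "(\<Sum>j\<in>{1..N}. D j * m l j) \<le> (\<Sum>j\<in>{1..N}. D j * m' l j)" if "l \<in> {1..L}" for l
    using assms that unfolding congestion_profile_def
    by (intro sum_weighted_le_of_support_minimal) auto
  with assms(3) show ?thesis
    unfolding sum_weighted_load by (meson atLeastAtMost_iff mult_left_mono sum_mono)
qed

lemma load_pos_imp_mass_pos: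
  assumes "congestion_profile L N M m" "j \<in> {1..N}" "load L \<gamma> m j > 0"
  obtains l where "l \<in> {1..L}" "m l j > 0"
proof -
  have "load L \<gamma> m j \<noteq> 0"
    using assms(3) by simp
  then obtain l where l: "l \<in> {1..L}" "\<gamma> l * m l j \<noteq> 0"
    unfolding load_def by (rule sum.not_neutral_contains_not_neutral)
  have "m l j \<ge> 0"
    using assms(1,2) l(1) unfolding congestion_profile_def by blast
  with l show thesis
    using that by (simp add: order_le_less)
qed

locale common_gain =
  fixes L N :: nat and \<gamma> :: "nat \<Rightarrow> real" and \<sigma>2 :: real
    and h :: "nat \<Rightarrow> nat \<Rightarrow> real" and hb :: "nat \<Rightarrow> real"
  assumes \<gamma>_pos: "\<forall>l\<in>{1..L}. \<gamma> l > 0"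
    and h_pos: "\<forall>l\<in>{1..L}. \<forall>j\<in>{1..N}. h l j > 0"
    and \<sigma>_pos: "\<sigma>2 > 0"
    and h_common: "\<forall>l\<in>{1..L}. \<forall>j\<in>{1..N}. h l j = hb j"
begin

text \<open>\<open>base_cost j * (z / (1 - z))\<close> is the share of station \<open>j\<close> in the total cost at load \<open>z\<close>;
  \<open>marginal_cost\<close> is its derivative in \<open>z\<close>.\<close>

definition base_cost :: "nat \<Rightarrow> real" where
  "base_cost j = \<sigma>2 / hb j"

definition marginal_cost :: "(nat \<Rightarrow> nat \<Rightarrow> real) \<Rightarrow> nat \<Rightarrow> real" where
  "marginal_cost m j = base_cost j / (1 - load L \<gamma> m j)^2"

lemma base_cost_pos: "0 < L \<Longrightarrow> j \<in> {1..N} \<Longrightarrow> base_cost j > 0"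
  using h_pos h_common \<sigma>_pos unfolding base_cost_def
  by (metis atLeastAtMost_iff divide_pos_pos less_one linorder_not_le order_refl)

lemma \<gamma>_nonneg: "\<forall>l\<in>{1..L}. \<gamma> l \<ge> 0"
  using \<gamma>_pos by (simp add: less_imp_le)

lemma gcoef_pos: "l \<in> {1..L} \<Longrightarrow> j \<in> {1..N} \<Longrightarrow> gcoef \<gamma> \<sigma>2 h l j > 0"
  using \<gamma>_pos h_pos \<sigma>_pos unfolding gcoef_def by simp

lemma gcoef_eq: "l \<in> {1..L} \<Longrightarrow> j \<in> {1..N} \<Longrightarrow> gcoef \<gamma> \<sigma>2 h l j = \<gamma> l * base_cost j"
  using h_common unfolding gcoef_def base_cost_def by simp

lemma sum_mass_gcoef:
  "j \<in> {1..N} \<Longrightarrow> (\<Sum>i\<in>{1..L}. m i j * gcoef \<gamma> \<sigma>2 h i j) = base_cost j * load L \<gamma> m j"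
  unfolding load_def sum_distrib_left by (intro sum.cong) (simp_all add: gcoef_eq)

lemma total_cost_eq:
  assumes "\<forall>j\<in>{1..N}. load L \<gamma> m j < 1"
  shows "total_cost L N \<gamma> \<sigma>2 h m
           = ereal (\<Sum>j\<in>{1..N}. base_cost j * (load L \<gamma> m j / (1 - load L \<gamma> m j)))"
proof -
  have "(\<Sum>l\<in>{1..L}. ereal (m l j * gcoef \<gamma> \<sigma>2 h l j) * cfun (load L \<gamma> m j))
      = ereal (base_cost j * (load L \<gamma> m j / (1 - load L \<gamma> m j)))" if "j \<in> {1..N}" for j
    using assms that sum_mass_gcoef[OF that, of m]
    by (simp add: cfun_def sum_divide_distrib[symmetric])
  then show ?thesis
    unfolding total_cost_def by simp
qed

lemma total_cost_overload:
  assumes "congestion_profile L N M m" "j \<in> {1..N}" "load L \<gamma> m j \<ge> 1"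
  shows "total_cost L N \<gamma> \<sigma>2 h m = \<infinity>"
proof -
  have "load L \<gamma> m j > 0"
    using assms(3) by simp
  then obtain l where l: "l \<in> {1..L}" "m l j > 0"
    by (rule load_pos_imp_mass_pos[OF assms(1,2)])
  then have "ereal (m l j * gcoef \<gamma> \<sigma>2 h l j) * cfun (load L \<gamma> m j) = \<infinity>"
    using gcoef_pos[OF l(1) assms(2)] assms(3) by (simp add: cfun_def)
  then have "(\<Sum>l\<in>{1..L}. ereal (m l j * gcoef \<gamma> \<sigma>2 h l j) * cfun (load L \<gamma> m j)) = \<infinity>"
    using l(1) unfolding sum_Pinfty by auto
  then show ?thesis
    using assms(2) unfolding total_cost_def sum_Pinfty by auto
qed

lemma toll_density_eq:
  assumes "l \<in> {1..L}" "j \<in> {1..N}" "load L \<gamma> m j < 1"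
  shows "toll_density L \<gamma> \<sigma>2 h m l j = ereal (\<gamma> l * marginal_cost m j)"
proof -
  define z where "z = load L \<gamma> m j"
  have "1 - z \<noteq> 0" using assms(3) by (simp add: z_def)
  then have "\<gamma> l * base_cost j / (1 - z) + \<gamma> l * (base_cost j * z / (1 - z)^2)
      = \<gamma> l * (base_cost j / (1 - z)^2)"
    by (simp add: divide_simps) algebra
  moreover have "(\<Sum>i\<in>{1..L}. ereal (m i j * gcoef \<gamma> \<sigma>2 h i j) * dcfun z)
      = ereal (base_cost j * z / (1 - z)^2)"
    using assms(2,3) sum_mass_gcoef[OF assms(2), of m]
    by (simp add: z_def dcfun_def sum_divide_distrib[symmetric])
  ultimately show ?thesis
    using assms unfolding toll_density_def marginal_cost_def z_def[symmetric]
    by (simp add: cfun_def gcoef_eq)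
qed

lemma toll_density_overload:
  assumes "l \<in> {1..L}" "j \<in> {1..N}" "load L \<gamma> m j \<ge> 1"
  shows "toll_density L \<gamma> \<sigma>2 h m l j = \<infinity>"
  using gcoef_pos[OF assms(1,2)] assms(3) unfolding toll_density_def by (simp add: cfun_def)

lemma toll_nash_eq_load_lt_1:
  assumes NE: "toll_nash_eq L N M \<gamma> \<sigma>2 h m"
    and feasible: "(\<Sum>l\<in>{1..L}. \<gamma> l * M l) < real N"
  shows "\<forall>j\<in>{1..N}. load L \<gamma> m j < 1"
proof (rule ccontr)
  assume "\<not> ?thesis"
  then obtain j0 where j0: "j0 \<in> {1..N}" "load L \<gamma> m j0 \<ge> 1"
    by (auto simp: not_less)
  have cp: "congestion_profile L N M m"
    using NE by (simp add: toll_nash_eq_def)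
  have "load L \<gamma> m j0 > 0"
    using j0(2) by simp
  then obtain l where l: "l \<in> {1..L}" "m l j0 > 0"
    by (rule load_pos_imp_mass_pos[OF cp j0(1)])
  have overload: "load L \<gamma> m k \<ge> 1" if k: "k \<in> {1..N}" for k
  proof (rule ccontr)
    assume "\<not> load L \<gamma> m k \<ge> 1"
    then have "toll_density L \<gamma> \<sigma>2 h m l k < \<infinity>"
      using toll_density_eq[OF l(1) k] by simp
    moreover have "toll_density L \<gamma> \<sigma>2 h m l j0 \<le> toll_density L \<gamma> \<sigma>2 h m l k"
      using NE l j0(1) k unfolding toll_nash_eq_def by blast
    ultimately show False
      using toll_density_overload[OF l(1) j0] by simp
  qed
  have "real N \<le> (\<Sum>j\<in>{1..N}. load L \<gamma> m j)"
    using sum_mono[of "{1..N}" "\<lambda>_. 1" "load L \<gamma> m"] overload by simp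
  then show False
    using sum_load[OF cp] feasible by simp
qed

lemma toll_nash_eq_support_minimal:
  assumes NE: "toll_nash_eq L N M \<gamma> \<sigma>2 h m"
    and feasible: "(\<Sum>l\<in>{1..L}. \<gamma> l * M l) < real N"
  shows "\<forall>l\<in>{1..L}. \<forall>j\<in>{1..N}. \<forall>k\<in>{1..N}. m l j > 0 \<longrightarrow> marginal_cost m j \<le> marginal_cost m k"
proof (intro ballI impI)
  fix l j k assume l: "l \<in> {1..L}" and j: "j \<in> {1..N}" and k: "k \<in> {1..N}" and "m l j > 0"
  then have "toll_density L \<gamma> \<sigma>2 h m l j \<le> toll_density L \<gamma> \<sigma>2 h m l k"
    using NE unfolding toll_nash_eq_def by blast
  then have "\<gamma> l * marginal_cost m j \<le> \<gamma> l * marginal_cost m k"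
    using toll_density_eq[OF l] toll_nash_eq_load_lt_1[OF NE feasible] j k by simp
  then show "marginal_cost m j \<le> marginal_cost m k"
    using \<gamma>_pos l by simp
qed

lemma toll_nash_eq_minimizes_total_cost:
  assumes "0 < L"
    and NE: "toll_nash_eq L N M \<gamma> \<sigma>2 h m"
    and feasible: "(\<Sum>l\<in>{1..L}. \<gamma> l * M l) < real N"
    and cp': "congestion_profile L N M m'"
  shows "total_cost L N \<gamma> \<sigma>2 h m \<le> total_cost L N \<gamma> \<sigma>2 h m'"
proof (cases "\<exists>j\<in>{1..N}. load L \<gamma> m' j \<ge> 1")
  case True
  then show ?thesis
    using total_cost_overload[OF cp'] by auto
next
  case False
  have lt1: "\<forall>j\<in>{1..N}. load L \<gamma> m j < 1"
    by (rule toll_nash_eq_load_lt_1[OF NE feasible])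
  have cp: "congestion_profile L N M m"
    using NE by (simp add: toll_nash_eq_def)
  have "(\<Sum>j\<in>{1..N}. marginal_cost m j * load L \<gamma> m j) \<le> (\<Sum>j\<in>{1..N}. marginal_cost m j * load L \<gamma> m' j)"
    by (rule sum_weighted_load_le_of_support_minimal[OF cp cp' \<gamma>_nonneg toll_nash_eq_support_minimal[OF NE feasible]])
  then have "(\<Sum>j\<in>{1..N}. base_cost j * (load L \<gamma> m j / (1 - load L \<gamma> m j)))
      \<le> (\<Sum>j\<in>{1..N}. base_cost j * (load L \<gamma> m' j / (1 - load L \<gamma> m' j)))"
    using lt1 False base_cost_pos[OF assms(1)] unfolding marginal_cost_def
    by (intro sum_frac_le_of_variational_ineq) (auto simp: less_imp_le)
  then show ?thesis
    using False lt1 by (simp add: total_cost_eq not_le)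
qed

end

theorem proposition13:
  fixes L N :: nat and M \<gamma> :: "nat \<Rightarrow> real" and \<sigma>2 :: real
    and h :: "nat \<Rightarrow> nat \<Rightarrow> real" and hb :: "nat \<Rightarrow> real"
    and m :: "nat \<Rightarrow> nat \<Rightarrow> real"
  assumes M_pos: "\<forall>l\<in>{1..L}. M l > 0"
    and \<gamma>_pos: "\<forall>l\<in>{1..L}. \<gamma> l > 0"
    and h_pos: "\<forall>l\<in>{1..L}. \<forall>j\<in>{1..N}. h l j > 0"
    and \<sigma>_pos: "\<sigma>2 > 0"
    and feasible: "(\<Sum>l\<in>{1..L}. \<gamma> l * M l) < real N"
    and h_common: "\<forall>l\<in>{1..L}. \<forall>j\<in>{1..N}. h l j = hb j"
    and NE: "toll_nash_eq L N M \<gamma> \<sigma>2 h m"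
  shows "\<forall>m'. congestion_profile L N M m' \<longrightarrow>
           total_cost L N \<gamma> \<sigma>2 h m \<le> total_cost L N \<gamma> \<sigma>2 h m'"
proof (cases "L = 0")
  case True
  then show ?thesis by (simp add: total_cost_def)
next
  case False
  interpret common_gain L N \<gamma> \<sigma>2 h hb
    using \<gamma>_pos h_pos \<sigma>_pos h_common by unfold_locales
  show ?thesis
    using toll_nash_eq_minimizes_total_cost[OF _ NE feasible] False by blast
qed

end
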